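(* Let $p,q$ be positive integers and let $s_1,\dots,s_p,d_1,\dots,d_q:[0,1]\to[0,1]$ be the truth functions of the hedge connectives of FLn with many hedges; that is, writing $s_0=d_0=\mathrm{id}_{[0,1]}$, for all $a,b\in[0,1]$: (1) $a\Rightarrow b\ \le\ h(a)\Rightarrow h(b)$ for every $h\in\{s_1,\dots,s_p,d_1,\dots,d_q\}$; (2) $s_i(a)\le s_{i-1}(a)$ for $i=1,\dots,p$; (3) $s_p(1)=1$; (4) $d_{j-1}(a)\le d_j(a)$ for $j=1,\dots,q$; (5) $d_q(0)=0$. Then every $h\in\{s_1,\dots,s_p,d_1,\dots,d_q\}$ is logically fitting.
   Context: Truth values form the Łukasiewicz algebra on $[0,1]$: $a\otimes b=\max(0,a+b-1)$, $a\Rightarrow b=\min(1,1-a+b)$, $a\Leftrightarrow b=(a\Rightarrow b)\wedge(b\Rightarrow a)$, with $\wedge=\min$. A unary operation $h:[0,1]\to[0,1]$ is logically fitting if there is a natural number $k>0$ such that $(a\Leftrightarrow b)^k\le h(a)\Leftrightarrow h(b)$ for all $a,b\in[0,1]$, where $x^k=x\otimes\cdots\otimes x$ ($k$ times). FLn with many hedges extends the first-order fuzzy logic FLn by truth-stressing hedges $s_1,\dots,s_p$ and truth-depressing hedges $d_1,\dots,d_q$ with degree-1 logical axioms $(A\to B)\to(hA\to hB)$, $s_iA\to s_{i-1}A$, $s_p\overline{1}$, $d_{j-1}A\to d_jA$, $\neg d_q\overline{0}$; conditions (1)–(5) express that these axioms have truth value 1 in every structure, where $\mathcal{D}(hA)=h(\mathcal{D}(A))$.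 *)

theory Defs
  imports Complex_Main
begin

text \<open>Lukasiewicz algebra on the unit interval (real numbers; only values in [0,1] matter).\<close>

definition luk_times :: "real \<Rightarrow> real \<Rightarrow> real" where
  "luk_times a b = max 0 (a + b - 1)"

definition luk_imp :: "real \<Rightarrow> real \<Rightarrow> real" where
  "luk_imp a b = min 1 (1 - a + b)"

definition luk_equiv :: "real \<Rightarrow> real \<Rightarrow> real" where
  "luk_equiv a b = min (luk_imp a b) (luk_imp b a)"

fun luk_pow :: "real \<Rightarrow> nat \<Rightarrow> real" where
  "luk_pow x 0 = 1"
| "luk_pow x (Suc k) = luk_times x (luk_pow x k)"

definition logically_fitting :: "(real \<Rightarrow> real) \<Rightarrow> bool" where
  "logically_fitting h \<longleftrightarrow>
     (\<exists>k::nat. k > 0 \<and>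
        (\<forall>a\<in>{0..1}. \<forall>b\<in>{0..1}. luk_pow (luk_equiv a b) k \<le> luk_equiv (h a) (h b)))"

end

theory Submission
  imports Defs
begin

text \<open>Only axiom (1) is needed: it makes every hedge non-expansive for \<open>\<Leftrightarrow>\<close>, so each hedge
  is logically fitting with exponent \<open>k = 1\<close>.\<close>

lemma luk_pow_one:
  assumes "0 \<le> x"
  shows "luk_pow x 1 = x"
  using assms by (simp add: luk_times_def)

lemma luk_equiv_nonneg:
  assumes "a \<in> {0..1}" and "b \<in> {0..1}"
  shows "0 \<le> luk_equiv a b"
  using assms by (auto simp: luk_equiv_def luk_imp_def)

lemma luk_equiv_le_if_luk_imp_le:
  assumes "\<forall>a\<in>{0..1}. \<forall>b\<in>{0..1}. luk_imp a b \<le> luk_imp (h a) (h b)"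
    and "a \<in> {0..1}" and "b \<in> {0..1}"
  shows "luk_equiv a b \<le> luk_equiv (h a) (h b)"
  using assms unfolding luk_equiv_def by (meson min.mono)

lemma logically_fitting_if_luk_imp_le:
  assumes "\<forall>a\<in>{0..1}. \<forall>b\<in>{0..1}. luk_imp a b \<le> luk_imp (h a) (h b)"
  shows "logically_fitting h"
  unfolding logically_fitting_def
proof (intro exI[of _ 1] conjI ballI)
  fix a b :: real
  assume "a \<in> {0..1}" and "b \<in> {0..1}"
  then have "luk_pow (luk_equiv a b) 1 = luk_equiv a b"
    by (rule luk_pow_one[OF luk_equiv_nonneg])
  also have "\<dots> \<le> luk_equiv (h a) (h b)"
    using assms \<open>a \<in> {0..1}\<close> \<open>b \<in> {0..1}\<close> by (rule luk_equiv_le_if_luk_imp_le)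
  finally show "luk_pow (luk_equiv a b) 1 \<le> luk_equiv (h a) (h b)" .
qed simp

theorem mainTheorem4:
  fixes p q :: nat and s d :: "nat \<Rightarrow> real \<Rightarrow> real"
  assumes "p > 0" and "q > 0"
    and range_s: "\<forall>i\<in>{1..p}. \<forall>a\<in>{0..1}. s i a \<in> {0..1}"
    and range_d: "\<forall>j\<in>{1..q}. \<forall>a\<in>{0..1}. d j a \<in> {0..1}"
    and ax1_s: "\<forall>i\<in>{1..p}. \<forall>a\<in>{0..1}. \<forall>b\<in>{0..1}. luk_imp a b \<le> luk_imp (s i a) (s i b)"
    and ax1_d: "\<forall>j\<in>{1..q}. \<forall>a\<in>{0..1}. \<forall>b\<in>{0..1}. luk_imp a b \<le> luk_imp (d j a) (d j b)"
    and ax2: "\<forall>i\<in>{1..p}. \<forall>a\<in>{0..1}. s i a \<le> (if i = 1 then a else s (i - 1) a)"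
    and ax3: "s p 1 = 1"
    and ax4: "\<forall>j\<in>{1..q}. \<forall>a\<in>{0..1}. (if j = 1 then a else d (j - 1) a) \<le> d j a"
    and ax5: "d q 0 = 0"
  shows "(\<forall>i\<in>{1..p}. logically_fitting (s i)) \<and> (\<forall>j\<in>{1..q}. logically_fitting (d j))"
  using ax1_s ax1_d logically_fitting_if_luk_imp_le by blast

end
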